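(* Let $G=(V,E)$ be a finite planar embedded graph, $\mathbf{p}$ a packing of $G$, and $V=V^+\sqcup V^-\sqcup V^=\sqcup V^0$ a partition. If $\mathbf{p}$ is second order rigid, then it is rigid.
   Context: A packing of $G=(V,E)$, $V=\{1,\dots,n\}$, is $\mathbf{p}=(x_1,y_1,r_1,\dots,x_n,y_n,r_n)\in\mathbb{R}^{3n}$, all $r_i>0$, with $(r_i+r_j)^2=(x_i-x_j)^2+(y_i-y_j)^2$ for all $(i,j)\in E$ and the neighbors of each vertex in the same counterclockwise order as in the embedding; $\mathbf{p}_i=(x_i,y_i)$. Partition: $V^+$ (radius may increase or stay), $V^-$ (may decrease or stay), $V^=$ (fixed), $V^0$ (free). An infinitesimal flex is $\mathbf{p}'$ with $(\mathbf{p}_i-\mathbf{p}_j)\cdot(\mathbf{p}_i'-\mathbf{p}_j')=(r_i+r_j)(r_i'+r_j')$ for all edges; proper if $r_i'\ge 0$ on $V^+$, $\le0$ on $V^-$, $=0$ on $V^=$; trivial if it is the derivative of a family of rigid motions (rotations/translations of centers, radii unchanged). For proper $\mathbf{p}'$, the modified partition is $\tilde V^+=\{i\in V^+:r_i'=0\}$, $\tilde V^-=\{i\in V^-:r_i'=0\}$, $\tilde V^==V^=$, $\tilde V^0$ the rest. $\mathbf{p}'$ is extendable if there is $\mathbf{p}''$ with $(\mathbf{p}_i-\mathbf{p}_j)\cdot(\mathbf{p}_i''-\mathbf{p}_j'')-(r_i+r_j)(r_i''+r_j'')=(r_i'+r_j')^2-(\mathbf{p}_i'-\mathbf{p}_j')\cdot(\mathbf{p}_i'-\mathbf{p}_j')$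 for all $(i,j)\in E$, and $r_i''\ge0$ on $\tilde V^+$, $\le 0$ on $\tilde V^-$, $=0$ on $\tilde V^=$. $\mathbf{p}$ is second order rigid if no nontrivial proper infinitesimal flex is extendable. A flex is an analytic path $\mathbf{p}(t)$, $t\in[0,1]$, of packings of $G$ with $\mathbf{p}(0)=\mathbf{p}$; it is proper if for all $t$, $r_i(t)\ge r_i$ on $V^+$, $r_i(t)\le r_i$ on $V^-$, $r_i(t)=r_i$ on $V^=$. $\mathbf{p}$ is rigid if every proper flex is a congruent motion (each $\mathbf{p}(t)$ is obtained from $\mathbf{p}$ by a Euclidean isometry of centers, radii unchanged). *)

theory Defs
  imports "HOL-Analysis.Analysis"
begin

text \<open>Vertices form a finite type 'v (V = UNIV).
  Edges: a symmetric irreflexive relation E (each undirected edge appears as both darts).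
  The planar embedding is given combinatorially by a rotation system: rot i lists the
  neighbours of i in counterclockwise order (cyclically).\<close>

type_synonym 'v cfg = "'v \<Rightarrow> complex \<times> real"

abbreviation ctr :: "'v cfg \<Rightarrow> 'v \<Rightarrow> complex" where "ctr p i \<equiv> fst (p i)"
abbreviation rad :: "'v cfg \<Rightarrow> 'v \<Rightarrow> real" where "rad p i \<equiv> snd (p i)"

definition simple_graph :: "('v \<times> 'v) set \<Rightarrow> bool" where
  "simple_graph E \<longleftrightarrow> sym E \<and> irrefl E"

definition rotation_system :: "('v \<times> 'v) set \<Rightarrow> ('v \<Rightarrow> 'v list) \<Rightarrow> bool" where
  "rotation_system E rot \<longleftrightarrow> (\<forall>i. distinct (rot i) \<and> set (rot i) = {j. (i, j) \<in> E})"

definition rot_next :: "('v \<Rightarrow> 'v list) \<Rightarrow> 'v \<Rightarrow> 'v \<Rightarrow> 'v" where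
  "rot_next rot v u =
     (let l = rot v; k = (THE k. k < length l \<and> l ! k = u) in l ! ((k + 1) mod length l))"

text \<open>Face-tracing permutation on darts; its orbits are the faces of the embedding.\<close>
definition face_step :: "('v \<Rightarrow> 'v list) \<Rightarrow> 'v \<times> 'v \<Rightarrow> 'v \<times> 'v" where
  "face_step rot d = (snd d, rot_next rot (snd d) (fst d))"

definition face_orbit :: "('v \<Rightarrow> 'v list) \<Rightarrow> 'v \<times> 'v \<Rightarrow> ('v \<times> 'v) set" where
  "face_orbit rot d = {(face_step rot ^^ k) d | k. True}"

text \<open>A rotation system is planar iff every connected component C with at least one edge
  satisfies Euler's formula |C| - |E_C| + |F_C| = 2.\<close>
definition planar_rotation :: "('v \<times> 'v) set \<Rightarrow> ('v \<Rightarrow> 'v list) \<Rightarrow> bool" where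
  "planar_rotation E rot \<longleftrightarrow>
     (\<forall>C \<in> UNIV // (E\<^sup>*). card C \<ge> 2 \<longrightarrow>
        int (card C) - int (card (E \<inter> (C \<times> C)) div 2)
          + int (card (face_orbit rot ` (E \<inter> (C \<times> C)))) = 2)"

definition planar_embedded_graph :: "('v \<times> 'v) set \<Rightarrow> ('v \<Rightarrow> 'v list) \<Rightarrow> bool" where
  "planar_embedded_graph E rot \<longleftrightarrow>
     simple_graph E \<and> rotation_system E rot \<and> planar_rotation E rot"

definition ccw_angle :: "complex \<Rightarrow> complex \<Rightarrow> real" where
  "ccw_angle u v = (if Arg (v / u) \<le> 0 then Arg (v / u) + 2 * pi else Arg (v / u))"

text \<open>The neighbours of i, in the cyclic order rot i, appear counterclockwise around the
  center of i exactly once (total turning angle 2 pi).\<close>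
definition ccw_order_ok :: "('v \<Rightarrow> 'v list) \<Rightarrow> 'v cfg \<Rightarrow> 'v \<Rightarrow> bool" where
  "ccw_order_ok rot p i \<longleftrightarrow>
     (let l = rot i; k = length l in
      k = 0 \<or>
      (\<Sum>a<k. ccw_angle (ctr p (l ! a) - ctr p i) (ctr p (l ! ((a + 1) mod k)) - ctr p i)) = 2 * pi)"

definition packing :: "('v \<times> 'v) set \<Rightarrow> ('v \<Rightarrow> 'v list) \<Rightarrow> 'v cfg \<Rightarrow> bool" where
  "packing E rot p \<longleftrightarrow>
     (\<forall>i. rad p i > 0) \<and>
     (\<forall>(i, j) \<in> E. (rad p i + rad p j)\<^sup>2 = (cmod (ctr p i - ctr p j))\<^sup>2) \<and>
     (\<forall>i. ccw_order_ok rot p i)"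

definition vertex_partition :: "'v set \<Rightarrow> 'v set \<Rightarrow> 'v set \<Rightarrow> 'v set \<Rightarrow> bool" where
  "vertex_partition Vp Vm Ve V0 \<longleftrightarrow>
     Vp \<union> Vm \<union> Ve \<union> V0 = UNIV \<and>
     Vp \<inter> Vm = {} \<and> Vp \<inter> Ve = {} \<and> Vp \<inter> V0 = {} \<and>
     Vm \<inter> Ve = {} \<and> Vm \<inter> V0 = {} \<and> Ve \<inter> V0 = {}"

definition inf_flex :: "('v \<times> 'v) set \<Rightarrow> 'v cfg \<Rightarrow> 'v cfg \<Rightarrow> bool" where
  "inf_flex E p q \<longleftrightarrow>
     (\<forall>(i, j) \<in> E. inner (ctr p i - ctr p j) (ctr q i - ctr q j)
                   = (rad p i + rad p j) * (rad q i + rad q j))"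

definition proper_inf :: "'v set \<Rightarrow> 'v set \<Rightarrow> 'v set \<Rightarrow> 'v cfg \<Rightarrow> bool" where
  "proper_inf Vp Vm Ve q \<longleftrightarrow>
     (\<forall>i\<in>Vp. rad q i \<ge> 0) \<and> (\<forall>i\<in>Vm. rad q i \<le> 0) \<and> (\<forall>i\<in>Ve. rad q i = 0)"

text \<open>Trivial infinitesimal flex: derivative at 0 of a family of rotations/translations
  of the centers (radii unchanged), i.e. c'_i = a + i*omega*c_i, r'_i = 0.\<close>
definition trivial_inf :: "'v cfg \<Rightarrow> 'v cfg \<Rightarrow> bool" where
  "trivial_inf p q \<longleftrightarrow>
     (\<exists>(a::complex) (\<omega>::real). \<forall>i. ctr q i = a + \<i> * complex_of_real \<omega> * ctr p i \<and> rad q i = 0)"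

definition extendable ::
  "('v \<times> 'v) set \<Rightarrow> 'v set \<Rightarrow> 'v set \<Rightarrow> 'v set \<Rightarrow> 'v cfg \<Rightarrow> 'v cfg \<Rightarrow> bool" where
  "extendable E Vp Vm Ve p q \<longleftrightarrow>
     (\<exists>s :: 'v cfg.
        (\<forall>(i, j) \<in> E.
           inner (ctr p i - ctr p j) (ctr s i - ctr s j) - (rad p i + rad p j) * (rad s i + rad s j)
           = (rad q i + rad q j)\<^sup>2 - inner (ctr q i - ctr q j) (ctr q i - ctr q j)) \<and>
        (\<forall>i \<in> {i \<in> Vp. rad q i = 0}. rad s i \<ge> 0) \<and>
        (\<forall>i \<in> {i \<in> Vm. rad q i = 0}. rad s i \<le> 0) \<and>
        (\<forall>i \<in> Ve. rad s i = 0))"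

definition second_order_rigid ::
  "('v \<times> 'v) set \<Rightarrow> 'v set \<Rightarrow> 'v set \<Rightarrow> 'v set \<Rightarrow> 'v cfg \<Rightarrow> bool" where
  "second_order_rigid E Vp Vm Ve p \<longleftrightarrow>
     (\<forall>q. inf_flex E p q \<and> proper_inf Vp Vm Ve q \<and> \<not> trivial_inf p q
          \<longrightarrow> \<not> extendable E Vp Vm Ve p q)"

definition real_analytic_on :: "(real \<Rightarrow> real) \<Rightarrow> real set \<Rightarrow> bool" where
  "real_analytic_on f S \<longleftrightarrow>
     (\<forall>t\<in>S. \<exists>\<delta>>0. \<exists>a :: nat \<Rightarrow> real.
        \<forall>s\<in>S. \<bar>s - t\<bar> < \<delta> \<longrightarrow> (\<lambda>n. a n * (s - t) ^ n) sums f s)"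

definition analytic_path :: "(real \<Rightarrow> 'v cfg) \<Rightarrow> bool" where
  "analytic_path P \<longleftrightarrow>
     (\<forall>i. real_analytic_on (\<lambda>t. Re (ctr (P t) i)) {0..1} \<and>
          real_analytic_on (\<lambda>t. Im (ctr (P t) i)) {0..1} \<and>
          real_analytic_on (\<lambda>t. rad (P t) i) {0..1})"

definition proper_flex ::
  "('v \<times> 'v) set \<Rightarrow> ('v \<Rightarrow> 'v list) \<Rightarrow> 'v set \<Rightarrow> 'v set \<Rightarrow> 'v set \<Rightarrow> 'v cfg
     \<Rightarrow> (real \<Rightarrow> 'v cfg) \<Rightarrow> bool" where
  "proper_flex E rot Vp Vm Ve p P \<longleftrightarrow>
     analytic_path P \<and> P 0 = p \<and>
     (\<forall>t\<in>{0..1}. packing E rot (P t) \<and>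
        (\<forall>i\<in>Vp. rad (P t) i \<ge> rad p i) \<and>
        (\<forall>i\<in>Vm. rad (P t) i \<le> rad p i) \<and>
        (\<forall>i\<in>Ve. rad (P t) i = rad p i))"

definition congruent_motion :: "'v cfg \<Rightarrow> (real \<Rightarrow> 'v cfg) \<Rightarrow> bool" where
  "congruent_motion p P \<longleftrightarrow>
     (\<forall>t\<in>{0..1}. \<exists>f :: complex \<Rightarrow> complex. (\<forall>x y. dist (f x) (f y) = dist x y) \<and>
        (\<forall>i. ctr (P t) i = f (ctr p i) \<and> rad (P t) i = rad p i))"

definition rigid ::
  "('v \<times> 'v) set \<Rightarrow> ('v \<Rightarrow> 'v list) \<Rightarrow> 'v set \<Rightarrow> 'v set \<Rightarrow> 'v set \<Rightarrow> 'v cfg \<Rightarrow> bool" where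
  "rigid E rot Vp Vm Ve p \<longleftrightarrow>
     (\<forall>P. proper_flex E rot Vp Vm Ve p P \<longrightarrow> congruent_motion p P)"

end

theory Submission
  imports Defs
begin

text \<open>Expand a proper flex in power series at t = 0, after turning it by a time dependent
  rotation that keeps one vertex u fixed and lets a second vertex v move only along the line
  through u and v. If the expansion is not constant, let k be the lowest order with a nonzero
  coefficient. The edge equations at order k make these coefficients an infinitesimal flex; it
  is proper because the first nonzero coefficient of a nonnegative series is positive, and
  nontrivial by the normalization. The edge equations at orders k + 1, ..., 2k make the
  coefficients of these orders, weighted by powers of a small time, a second order extension
  of it, the sign conditions coming from the truncated radius series. Second order rigidity
  thus forces the expansion to be constant, so distances and radii are constant near 0, by
  analyticity on all of [0, 1], and equal distances give a congruence of the plane.\<close>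

section \<open>Real power series\<close>

definition fps_radius_gt :: "real \<Rightarrow> real fps \<Rightarrow> bool" where
  "fps_radius_gt d F \<longleftrightarrow> ereal d < fps_conv_radius F"

lemma fps_radius_gt_mono:
  assumes "fps_radius_gt d F" "d' \<le> d"
  shows "fps_radius_gt d' F"
proof -
  have "ereal d' \<le> ereal d" using assms(2) by simp
  then show ?thesis using assms(1) unfolding fps_radius_gt_def by (rule order.strict_trans1)
qed

lemma fps_radius_gt_min:
  "ereal d < fps_conv_radius F \<Longrightarrow> ereal d < fps_conv_radius G
     \<Longrightarrow> min (fps_conv_radius F) (fps_conv_radius G) \<le> fps_conv_radius H \<Longrightarrow> fps_radius_gt d H"
  unfolding fps_radius_gt_def by (meson min_less_iff_conj order.strict_trans2)

lemma fps_radius_gt_add [simp]: "fps_radius_gt d F \<Longrightarrow> fps_radius_gt d G \<Longrightarrow> fps_radius_gt d (F + G)"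
  and fps_radius_gt_diff [simp]: "fps_radius_gt d F \<Longrightarrow> fps_radius_gt d G \<Longrightarrow> fps_radius_gt d (F - G)"
  and fps_radius_gt_mult [simp]: "fps_radius_gt d F \<Longrightarrow> fps_radius_gt d G \<Longrightarrow> fps_radius_gt d (F * G)"
  unfolding fps_radius_gt_def
  by (auto intro: fps_radius_gt_min[unfolded fps_radius_gt_def] fps_conv_radius_add
      fps_conv_radius_diff fps_conv_radius_mult)

lemma fps_radius_gt_const [simp]: "fps_radius_gt d (fps_const c)"
  unfolding fps_radius_gt_def by simp

lemma fps_radius_gt_imp_norm_less:
  assumes "fps_radius_gt d F" "\<bar>h\<bar> < d"
  shows "ereal (norm h) < fps_conv_radius F"
proof -
  have "ereal (norm h) < ereal d" using assms(2) by simp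
  then show ?thesis using assms(1) unfolding fps_radius_gt_def by (rule order.strict_trans)
qed

lemma fps_radius_gt_imp_pos:
  assumes "fps_radius_gt d F" "0 < d"
  shows "0 < fps_conv_radius F"
proof -
  have "0 < ereal d" using assms(2) by simp
  then show ?thesis using assms(1) unfolding fps_radius_gt_def by (rule order.strict_trans)
qed

lemma eval_fps_add_within:
  "fps_radius_gt d F \<Longrightarrow> fps_radius_gt d G \<Longrightarrow> \<bar>h\<bar> < d \<Longrightarrow> eval_fps (F + G) h = eval_fps F h + eval_fps G h"
  and eval_fps_diff_within:
  "fps_radius_gt d F \<Longrightarrow> fps_radius_gt d G \<Longrightarrow> \<bar>h\<bar> < d \<Longrightarrow> eval_fps (F - G) h = eval_fps F h - eval_fps G h"
  and eval_fps_mult_within: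
  "fps_radius_gt d F \<Longrightarrow> fps_radius_gt d G \<Longrightarrow> \<bar>h\<bar> < d \<Longrightarrow> eval_fps (F * G) h = eval_fps F h * eval_fps G h"
  by (intro eval_fps_add eval_fps_diff eval_fps_mult fps_radius_gt_imp_norm_less; assumption)+

lemma eval_fps_eq_power_subdegree:
  fixes F :: "real fps"
  assumes "norm t < fps_conv_radius F"
  shows "eval_fps F t = t ^ subdegree F * eval_fps (fps_shift (subdegree F) F) t"
proof (cases "t = 0")
  case True
  show ?thesis
  proof (cases "subdegree F = 0")
    case False
    then have "fps_nth F 0 = 0" by (intro nth_less_subdegree_zero) simp
    then show ?thesis using True False by (simp add: eval_fps_at_0)
  qed (simp add: True)
next
  case False
  have "subdegree F \<le> subdegree F" by simp
  from eval_fps_shift[OF this assms] False show ?thesis by simp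
qed

lemma eventually_norm_less_ereal:
  assumes "0 < (R :: ereal)"
  shows "eventually (\<lambda>t::real. ereal (norm t) < R) (at 0)"
proof -
  have "((\<lambda>t::real. ereal (norm t)) \<longlongrightarrow> ereal 0) (at 0)"
    unfolding lim_ereal by (intro tendsto_norm_zero tendsto_ident_at)
  from order_tendstoD(2)[OF this, of R] assms show ?thesis by (simp add: zero_ereal_def)
qed

lemma tendsto_eval_fps_shift_subdegree:
  fixes F :: "real fps"
  assumes "0 < fps_conv_radius F"
  shows "(eval_fps (fps_shift (subdegree F) F) \<longlongrightarrow> fps_nth F (subdegree F)) (at 0)"
proof -
  have "norm (0::real) < fps_conv_radius (fps_shift (subdegree F) F)"
    using assms by (simp add: zero_ereal_def)
  then have "isCont (eval_fps (fps_shift (subdegree F) F)) 0"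
    by (rule continuous_eval_fps)
  then show ?thesis by (simp add: isCont_def eval_fps_at_0)
qed

lemma eventually_eval_fps_ne_0:
  fixes F :: "real fps"
  assumes "0 < fps_conv_radius F" "F \<noteq> 0"
  shows "eventually (\<lambda>t. eval_fps F t \<noteq> 0) (at 0)"
proof -
  have "eventually (\<lambda>t. eval_fps (fps_shift (subdegree F) F) t \<noteq> 0) (at 0)"
    using tendsto_eval_fps_shift_subdegree[OF assms(1)] by (rule tendsto_imp_eventually_ne) (use assms(2) in simp)
  moreover have "eventually (\<lambda>t::real. t \<noteq> 0) (at 0)" by (simp add: eventually_at_filter)
  ultimately show ?thesis using eventually_norm_less_ereal[OF assms(1)]
  proof eventually_elim
    case (elim t)
    then show ?case using eval_fps_eq_power_subdegree[of t F] by simp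
  qed
qed

lemma eventually_eval_fps_pos:
  fixes F :: "real fps"
  assumes "0 < fps_conv_radius F" "0 < fps_nth F (subdegree F)"
  shows "eventually (\<lambda>t. 0 < eval_fps F t) (at_right 0)"
proof -
  have "(eval_fps (fps_shift (subdegree F) F) \<longlongrightarrow> fps_nth F (subdegree F)) (at_right 0)"
    using tendsto_eval_fps_shift_subdegree[OF assms(1)] by (rule filterlim_mono) (simp_all add: at_le)
  then have "eventually (\<lambda>t. 0 < eval_fps (fps_shift (subdegree F) F) t) (at_right 0)"
    using assms(2) by (rule order_tendstoD(1))
  moreover have "eventually (\<lambda>t::real. 0 < t) (at_right 0)" by (simp add: eventually_at_right_less)
  moreover have "eventually (\<lambda>t::real. ereal (norm t) < fps_conv_radius F) (at_right 0)"
    using eventually_norm_less_ereal[OF assms(1)] by (rule filter_leD[rotated]) (simp add: at_le)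
  ultimately show ?thesis
  proof eventually_elim
    case (elim t)
    have "eval_fps F t = t ^ subdegree F * eval_fps (fps_shift (subdegree F) F) t"
      using elim(3) by (rule eval_fps_eq_power_subdegree)
    with elim(1,2) show ?case by simp
  qed
qed

lemma fps_eq_0_if_eventually_eval_eq_0:
  fixes F :: "real fps"
  assumes "0 < fps_conv_radius F" "eventually (\<lambda>t. eval_fps F t = 0) G" "G \<le> at 0" "G \<noteq> bot"
  shows "F = 0"
proof (rule ccontr)
  assume "F \<noteq> 0"
  with assms(1,3) have "eventually (\<lambda>t. eval_fps F t \<noteq> 0) G"
    by (blast intro: filter_leD eventually_eval_fps_ne_0)
  with assms(2) have "eventually (\<lambda>t. False) G" by eventually_elim simp
  with assms(4) show False by simp
qed

lemma fps_eq_if_eval_eq_at_right: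
  fixes F G :: "real fps"
  assumes "fps_radius_gt d F" "fps_radius_gt d G" "0 < d"
    and "\<And>h. h \<in> {0<..<d} \<Longrightarrow> eval_fps F h = eval_fps G h"
  shows "F = G"
proof -
  have ev: "eventually (\<lambda>h. eval_fps (F - G) h = 0) (at_right 0)"
  proof (rule eventually_mono[OF eventually_at_right_real[OF assms(3)]])
    fix h assume h: "h \<in> {0<..<d}"
    then have "\<bar>h\<bar> < d" by auto
    then show "eval_fps (F - G) h = 0" using assms(4)[OF h] eval_fps_diff_within[OF assms(1,2)] by simp
  qed
  have "0 < fps_conv_radius (F - G)"
    using assms(1-3) by (intro fps_radius_gt_imp_pos[of d]) simp_all
  then have "F - G = 0"
    by (rule fps_eq_0_if_eventually_eval_eq_0[OF _ ev]) (simp_all add: at_le trivial_limit_at_right_real)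
  then show ?thesis by simp
qed

lemma fps_subdegree_nth_pos_if_eventually_nonneg:
  fixes F :: "real fps"
  assumes "0 < fps_conv_radius F" "F \<noteq> 0" "eventually (\<lambda>t. 0 \<le> eval_fps F t) (at_right 0)"
  shows "0 < fps_nth F (subdegree F)"
proof (rule ccontr)
  assume "\<not> 0 < fps_nth F (subdegree F)"
  with assms(2) have "0 < fps_nth (- F) (subdegree (- F))" by (simp add: less_le)
  with assms(1) have "eventually (\<lambda>t. 0 < eval_fps (- F) t) (at_right 0)"
    by (intro eventually_eval_fps_pos) simp_all
  moreover have "eventually (\<lambda>t::real. ereal (norm t) < fps_conv_radius F) (at_right 0)"
    using eventually_norm_less_ereal[OF assms(1)] by (rule filter_leD[rotated]) (simp add: at_le)
  ultimately have "eventually (\<lambda>t. False) (at_right (0::real))"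
    using assms(3) by eventually_elim (simp add: eval_fps_minus)
  then show False by (simp add: trivial_limit_at_right_real)
qed

lemma fps_nth_nonneg_if_eventually_nonneg:
  fixes F :: "real fps"
  assumes "0 < fps_conv_radius F" "eventually (\<lambda>t. 0 \<le> eval_fps F t) (at_right 0)"
    and "\<forall>j<n. fps_nth F j = 0"
  shows "0 \<le> fps_nth F n"
proof (cases "fps_nth F n = 0")
  case False
  then have "subdegree F = n" using assms(3) by (intro subdegreeI) auto
  with False assms(1,2) fps_subdegree_nth_pos_if_eventually_nonneg[of F] show ?thesis by force
qed simp

lemma eval_fps_cutoff:
  fixes F :: "real fps"
  shows "eval_fps (fps_cutoff n F) t = (\<Sum>j<n. fps_nth F j * t ^ j)"
  unfolding eval_fps_def by (subst suminf_finite[of "{..<n}"]) auto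

lemma fps_conv_radius_cutoff_pos:
  fixes F :: "real fps"
  shows "0 < fps_conv_radius (fps_cutoff n F)"
proof -
  have "summable (\<lambda>j. fps_nth (fps_cutoff n F) j * (1::real) ^ j)"
    by (rule summable_finite[of "{..<n}"]) auto
  then have "norm (1::real) \<le> conv_radius (fps_nth (fps_cutoff n F))"
    by (rule conv_radius_geI)
  then show ?thesis unfolding fps_conv_radius_def by (rule order.strict_trans2[rotated]) simp_all
qed

lemma eventually_fps_cutoff_nonneg:
  fixes F :: "real fps"
  assumes "0 < fps_conv_radius F" "eventually (\<lambda>t. 0 \<le> eval_fps F t) (at_right 0)"
  shows "eventually (\<lambda>t. 0 \<le> (\<Sum>j<n. fps_nth F j * t ^ j)) (at_right 0)"
proof (cases "fps_cutoff n F = 0")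
  case True
  then show ?thesis using eval_fps_cutoff[of n F] by simp
next
  case False
  then have nz: "F \<noteq> 0" and sub: "subdegree F < n"
    using fps_cutoff_zero_iff[of n F] by (fastforce, meson not_le)
  have "subdegree (fps_cutoff n F) = subdegree F"
  proof (rule subdegreeI)
    show "fps_nth (fps_cutoff n F) (subdegree F) \<noteq> 0"
      using sub nth_subdegree_nonzero[OF nz] by (simp only: fps_cutoff_nth if_True not_False_eq_True)
  qed (simp only: fps_cutoff_nth nth_less_subdegree_zero if_cancel)
  then have "0 < fps_nth (fps_cutoff n F) (subdegree (fps_cutoff n F))"
    using sub fps_subdegree_nth_pos_if_eventually_nonneg[OF assms(1) nz assms(2)]
    by (simp only: fps_cutoff_nth if_True not_False_eq_True)
  from eventually_eval_fps_pos[OF fps_conv_radius_cutoff_pos this] show ?thesis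
    by (rule eventually_mono) (simp add: eval_fps_cutoff)
qed

lemma fps_eq_const_plus_X_power_shift:
  fixes F :: "real fps"
  assumes "1 \<le> k" "\<forall>j. 0 < j \<and> j < k \<longrightarrow> fps_nth F j = 0"
  shows "F = fps_const (fps_nth F 0) + fps_X ^ k * fps_shift k F"
proof (rule fps_ext)
  fix n
  show "fps_nth F n = fps_nth (fps_const (fps_nth F 0) + fps_X ^ k * fps_shift k F) n"
    using assms by (cases "n = 0") (auto simp: fps_X_power_mult_nth)
qed

lemma fps_mult_nth_if_gap:
  fixes F G :: "real fps"
  assumes k: "1 \<le> k" and F: "\<forall>j. 0 < j \<and> j < k \<longrightarrow> fps_nth F j = 0"
    and G: "\<forall>j. 0 < j \<and> j < k \<longrightarrow> fps_nth G j = 0" and n: "0 < n" "n \<le> 2 * k"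
  shows "fps_nth (F * G) n = fps_nth F 0 * fps_nth G n + fps_nth G 0 * fps_nth F n
           + (if n = 2 * k then fps_nth F k * fps_nth G k else 0)"
proof -
  define A where "A = fps_shift k F"
  define B where "B = fps_shift k G"
  define c where "c = fps_nth F 0"
  define d where "d = fps_nth G 0"
  have FF: "F = fps_const c + fps_X ^ k * A"
    unfolding A_def c_def by (rule fps_eq_const_plus_X_power_shift[OF k F])
  have GG: "G = fps_const d + fps_X ^ k * B"
    unfolding B_def d_def by (rule fps_eq_const_plus_X_power_shift[OF k G])
  have "F * G = fps_const (c * d) + fps_X ^ k * (fps_const c * B + fps_const d * A)
          + fps_X ^ k * (fps_X ^ k * (A * B))"
    unfolding FF GG by (simp add: algebra_simps)
  then have "fps_nth (F * G) n = (if n < k then 0 else c * fps_nth B (n - k) + d * fps_nth A (n - k))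
      + (if n < k then 0 else if n - k < k then 0 else fps_nth (A * B) (n - k - k))"
    using n by (simp add: fps_X_power_mult_nth)
  also have "\<dots> = c * fps_nth G n + d * fps_nth F n
           + (if n = 2 * k then fps_nth F k * fps_nth G k else 0)"
    using F G n unfolding A_def B_def by (cases "n < k") auto
  finally show ?thesis unfolding c_def d_def by simp
qed

lemma fps_sum_squares_nth_if_gap:
  fixes A B C :: "real fps"
  assumes eq: "A * A + B * B = C * C" and k: "1 \<le> k"
    and gap: "\<forall>j. 0 < j \<and> j < k \<longrightarrow> fps_nth A j = 0 \<and> fps_nth B j = 0 \<and> fps_nth C j = 0"
    and n: "0 < n" "n \<le> 2 * k"
  shows "2 * (fps_nth A 0 * fps_nth A n + fps_nth B 0 * fps_nth B n - fps_nth C 0 * fps_nth C n)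
    + (if n = 2 * k then (fps_nth A k)\<^sup>2 + (fps_nth B k)\<^sup>2 - (fps_nth C k)\<^sup>2 else 0) = 0"
proof -
  have gA: "\<forall>j. 0 < j \<and> j < k \<longrightarrow> fps_nth A j = 0"
    and gB: "\<forall>j. 0 < j \<and> j < k \<longrightarrow> fps_nth B j = 0"
    and gC: "\<forall>j. 0 < j \<and> j < k \<longrightarrow> fps_nth C j = 0"
    using gap by blast+
  have "fps_nth (A * A) n + fps_nth (B * B) n = fps_nth (C * C) n"
    using arg_cong[OF eq, of "\<lambda>F. fps_nth F n"] by simp
  then show ?thesis
    unfolding fps_mult_nth_if_gap[OF k gA gA n] fps_mult_nth_if_gap[OF k gB gB n]
      fps_mult_nth_if_gap[OF k gC gC n]
    by (auto simp: power2_eq_square algebra_simps split: if_splits)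
qed


section \<open>Real analytic functions on the unit interval\<close>

lemma real_analytic_on_unit_interval_imp_fps:
  assumes "real_analytic_on f {0..1}" "t \<in> {0..1}"
  obtains d F where "0 < d" "d \<le> 1" "fps_radius_gt d F"
    "\<And>h. \<bar>h\<bar> < d \<Longrightarrow> t + h \<in> {0..1} \<Longrightarrow> eval_fps F h = f (t + h)"
proof -
  from assms obtain d0 a where d0: "0 < d0"
    and sums: "\<And>s. s \<in> {0..1} \<Longrightarrow> \<bar>s - t\<bar> < d0 \<Longrightarrow> (\<lambda>n. a n * (s - t) ^ n) sums f s"
    unfolding real_analytic_on_def by blast
  define d where "d = min (d0 / 2) (1 / 4)"
  define x where "x = min (3 * d0 / 4) (1 / 2)"
  \<comment> \<open>Convergence at a point of [0, 1] at distance x > d from t, on the side of t with more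
    room, bounds the radius of convergence from below.\<close>
  define s where "s = (if t \<le> 1 / 2 then t + x else t - x)"
  have x: "d < x" "x < d0" unfolding x_def d_def using d0 by auto
  have s: "s \<in> {0..1}" "\<bar>s - t\<bar> = x" using assms(2) x d0 unfolding s_def x_def by auto
  have "summable (\<lambda>n. a n * (s - t) ^ n)" using sums[OF s(1)] s(2) x by (auto simp: sums_iff)
  then have "norm (s - t) \<le> conv_radius a" by (rule conv_radius_geI)
  then have "ereal x \<le> fps_conv_radius (Abs_fps a)" using s(2) by (simp add: fps_conv_radius_def)
  moreover have "ereal d < ereal x" using x(1) by simp
  ultimately have "fps_radius_gt d (Abs_fps a)"
    unfolding fps_radius_gt_def by (rule order.strict_trans2[rotated])
  moreover have "eval_fps (Abs_fps a) h = f (t + h)" if "\<bar>h\<bar> < d" "t + h \<in> {0..1}" for h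
  proof -
    have "(\<lambda>n. a n * h ^ n) sums f (t + h)" using sums[OF that(2)] that(1) x by simp
    then show ?thesis unfolding eval_fps_def by (simp add: sums_iff)
  qed
  moreover have "0 < d" "d \<le> 1" unfolding d_def using d0 by auto
  ultimately show ?thesis using that by blast
qed

text \<open>Unlike in real_analytic_on, the radius of convergence of the local series is required to
  exceed the neighbourhood on which it represents f; this makes the notion closed under sums
  and products.\<close>

definition locally_fps :: "(real \<Rightarrow> real) \<Rightarrow> bool" where
  "locally_fps f \<longleftrightarrow> (\<forall>t\<in>{0..1}. \<exists>d>0. \<exists>F. fps_radius_gt d F \<and>
      (\<forall>h. \<bar>h\<bar> < d \<and> t + h \<in> {0..1} \<longrightarrow> eval_fps F h = f (t + h)))"

lemma real_analytic_on_imp_locally_fps: "real_analytic_on f {0..1} \<Longrightarrow> locally_fps f"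
  unfolding locally_fps_def by (metis real_analytic_on_unit_interval_imp_fps)

lemma locally_fps_const: "locally_fps (\<lambda>t. c)"
  unfolding locally_fps_def by (auto intro!: exI[of _ 1] exI[of _ "fps_const c"])

lemma locally_fps_binop:
  assumes "locally_fps f" "locally_fps g"
    and op: "\<And>F G d h. fps_radius_gt d F \<Longrightarrow> fps_radius_gt d G \<Longrightarrow> \<bar>h\<bar> < d
       \<Longrightarrow> fps_radius_gt d (opF F G) \<and> eval_fps (opF F G) h = opr (eval_fps F h) (eval_fps G h)"
  shows "locally_fps (\<lambda>t. opr (f t) (g t))"
  unfolding locally_fps_def
proof
  fix t :: real assume t: "t \<in> {0..1}"
  from assms(1) t obtain d1 F where d1: "0 < d1" "fps_radius_gt d1 F"
    "\<And>h. \<bar>h\<bar> < d1 \<Longrightarrow> t + h \<in> {0..1} \<Longrightarrow> eval_fps F h = f (t + h)"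
    unfolding locally_fps_def by blast
  from assms(2) t obtain d2 G where d2: "0 < d2" "fps_radius_gt d2 G"
    "\<And>h. \<bar>h\<bar> < d2 \<Longrightarrow> t + h \<in> {0..1} \<Longrightarrow> eval_fps G h = g (t + h)"
    unfolding locally_fps_def by blast
  define d where "d = min d1 d2"
  have rF: "fps_radius_gt d F" and rG: "fps_radius_gt d G"
    using d1(2) d2(2) fps_radius_gt_mono unfolding d_def by auto
  have "0 < d" using d1 d2 unfolding d_def by simp
  moreover have "fps_radius_gt d (opF F G)" using op[OF rF rG, of 0] \<open>0 < d\<close> by simp
  moreover have "eval_fps (opF F G) h = opr (f (t + h)) (g (t + h))"
    if "\<bar>h\<bar> < d" "t + h \<in> {0..1}" for h
    using op[OF rF rG that(1)] d1(3)[of h] d2(3)[of h] that unfolding d_def by simp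
  ultimately show "\<exists>d>0. \<exists>H. fps_radius_gt d H \<and>
      (\<forall>h. \<bar>h\<bar> < d \<and> t + h \<in> {0..1} \<longrightarrow> eval_fps H h = opr (f (t + h)) (g (t + h)))"
    by blast
qed

lemma locally_fps_add: "locally_fps f \<Longrightarrow> locally_fps g \<Longrightarrow> locally_fps (\<lambda>t. f t + g t)"
  by (rule locally_fps_binop[where opF = "(+)"]) (auto simp: eval_fps_add_within)

lemma locally_fps_diff: "locally_fps f \<Longrightarrow> locally_fps g \<Longrightarrow> locally_fps (\<lambda>t. f t - g t)"
  by (rule locally_fps_binop[where opF = "(-)"]) (auto simp: eval_fps_diff_within)

lemma locally_fps_mult: "locally_fps f \<Longrightarrow> locally_fps g \<Longrightarrow> locally_fps (\<lambda>t. f t * g t)"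
  by (rule locally_fps_binop[where opF = "(*)"]) (auto simp: eval_fps_mult_within)

lemma locally_fps_eq_0_near_if_eq_0_left:
  assumes "locally_fps f" "T \<in> {0<..1}" "\<forall>s\<in>{0..<T}. f s = 0"
  obtains d where "0 < d" "\<And>s. s \<in> {0..1} \<Longrightarrow> \<bar>s - T\<bar> < d \<Longrightarrow> f s = 0"
proof -
  from assms(1,2) obtain d F where d: "0 < d" "fps_radius_gt d F"
    and F: "\<And>h. \<bar>h\<bar> < d \<Longrightarrow> T + h \<in> {0..1} \<Longrightarrow> eval_fps F h = f (T + h)"
    unfolding locally_fps_def by fastforce
  have "eventually (\<lambda>h. h \<in> {- min d T<..<0}) (at_left (0::real))"
    using d(1) assms(2) by (intro eventually_at_left_real) simp
  then have "eventually (\<lambda>h. eval_fps F h = 0) (at_left 0)"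
    by (rule eventually_mono) (use assms(2,3) F in auto)
  then have "F = 0"
    by (rule fps_eq_0_if_eventually_eval_eq_0[OF fps_radius_gt_imp_pos[OF d(2,1)]])
      (simp_all add: at_le trivial_limit_at_left_real)
  show ?thesis
  proof (rule that[OF d(1)])
    fix s assume "s \<in> {0..1}" "\<bar>s - T\<bar> < d"
    then show "f s = 0" using F[of "s - T"] \<open>F = 0\<close> by simp
  qed
qed

theorem locally_fps_eq_0_if_eq_0_near_0:
  assumes f: "locally_fps f" and e: "0 < e" "\<forall>s\<in>{0..<e}. f s = 0"
  shows "\<forall>s\<in>{0..1}. f s = 0"
proof -
  define A where "A = {\<tau>\<in>{0..1}. \<forall>s\<in>{0..<\<tau>}. f s = 0}"
  define T where "T = Sup A"
  have A0: "min e 1 \<in> A" using e unfolding A_def by auto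
  have A01: "A \<subseteq> {0..1}" unfolding A_def by blast
  then have bdd: "bdd_above A" by (rule bdd_above_mono[OF bdd_above_Icc])
  have "min e 1 \<le> T" unfolding T_def using A0 bdd by (rule cSup_upper)
  moreover have "T \<le> 1" unfolding T_def using A0 A01 by (intro cSup_least) auto
  ultimately have T: "T \<in> {0<..1}" using e by auto
  have below: "\<forall>s\<in>{0..<T}. f s = 0"
  proof
    fix s assume s: "s \<in> {0..<T}"
    then obtain \<tau> where "\<tau> \<in> A" "s < \<tau>"
      using less_cSup_iff[OF _ bdd, of s] A0 unfolding T_def by auto
    then show "f s = 0" using s unfolding A_def by auto
  qed
  obtain d where d: "0 < d" and near: "\<And>s. s \<in> {0..1} \<Longrightarrow> \<bar>s - T\<bar> < d \<Longrightarrow> f s = 0"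
    using locally_fps_eq_0_near_if_eq_0_left[OF f T below] by blast
  have "T = 1"
  proof (rule ccontr)
    assume "T \<noteq> 1"
    define \<tau> where "\<tau> = min 1 (T + d / 2)"
    have "f s = 0" if "s \<in> {0..<\<tau>}" for s
      using below near[of s] that T d unfolding \<tau>_def by (cases "s < T") auto
    then have "\<tau> \<in> A" using T d unfolding A_def \<tau>_def by auto
    then have "\<tau> \<le> T" unfolding T_def using bdd by (rule cSup_upper)
    then show False using T \<open>T \<noteq> 1\<close> d unfolding \<tau>_def by auto
  qed
  then show ?thesis using below near[of 1] d by auto
qed

lemma real_analytic_family_fps_near_0:
  fixes f :: "'i::finite \<Rightarrow> real \<Rightarrow> real"
  assumes "\<And>i. real_analytic_on (f i) {0..1}"
  obtains d F where "0 < d" "d \<le> 1" "\<And>i. fps_radius_gt d (F i)"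
    "\<And>i h. h \<in> {0..<d} \<Longrightarrow> eval_fps (F i) h = f i h"
proof -
  have "\<forall>i. \<exists>d G. 0 < d \<and> d \<le> 1 \<and> fps_radius_gt d G \<and> (\<forall>h\<in>{0..<d}. eval_fps G h = f i h)"
  proof
    fix i
    obtain d G where "0 < d" "d \<le> 1" "fps_radius_gt d G"
      "\<And>h. \<bar>h\<bar> < d \<Longrightarrow> 0 + h \<in> {0..1} \<Longrightarrow> eval_fps G h = f i (0 + h)"
      using real_analytic_on_unit_interval_imp_fps[OF assms, of 0 i] by auto
    then show "\<exists>d G. 0 < d \<and> d \<le> 1 \<and> fps_radius_gt d G \<and> (\<forall>h\<in>{0..<d}. eval_fps G h = f i h)"
      by (intro exI[of _ d] exI[of _ G]) auto
  qed
  then obtain D G where DG: "\<And>i. 0 < D i \<and> D i \<le> 1 \<and> fps_radius_gt (D i) (G i)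
      \<and> (\<forall>h\<in>{0..<D i}. eval_fps (G i) h = f i h)"
    by metis
  define d where "d = Min (range D)"
  have "0 < d" "\<And>i. d \<le> D i" using DG unfolding d_def by auto
  then show ?thesis
    using that[of d G] DG by (meson atLeastLessThan_iff fps_radius_gt_mono order.trans less_le_trans)
qed

section \<open>Congruent point configurations in the plane\<close>

lemma eq_or_eq_cnj_if_Re_eq_Im_mult_eq:
  fixes z w :: "'a \<Rightarrow> complex"
  assumes Re: "\<And>i. Re (w i) = Re (z i)" and Im: "\<And>i j. Im (w i) * Im (w j) = Im (z i) * Im (z j)"
  shows "w = z \<or> w = (\<lambda>i. cnj (z i))"
proof (rule ccontr)
  assume "\<not> ?thesis"
  then obtain i j where ij: "w i \<noteq> z i" "w j \<noteq> cnj (z j)" by (auto simp: fun_eq_iff)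
  have sq: "Im (w l) = Im (z l) \<or> Im (w l) = - Im (z l)" for l
    using Im[of l l] by (auto simp: power2_eq_iff simp flip: power2_eq_square)
  from ij(1) sq[of i] Re[of i] have i: "Im (w i) = - Im (z i)" "Im (z i) \<noteq> 0"
    by (auto simp: complex_eq_iff)
  from ij(2) sq[of j] Re[of j] have j: "Im (w j) = Im (z j)" "Im (z j) \<noteq> 0"
    by (auto simp: complex_eq_iff)
  from Im[of i j] i j show False by simp
qed

lemma cmod_diff_sq: "(cmod (a - b))\<^sup>2 = (cmod a)\<^sup>2 + (cmod b)\<^sup>2 - 2 * Re (a * cnj b)"
  unfolding cmod_power2 by (simp add: power2_eq_square algebra_simps)

lemma eq_or_eq_cnj_if_dist_eq_0_1:
  fixes z w :: "'a \<Rightarrow> complex"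
  assumes diff: "\<And>i j. cmod (w i - w j) = cmod (z i - z j)"
    and u: "w u = 0" "z u = 0" and v: "w v = 1" "z v = 1"
  shows "w = z \<or> w = (\<lambda>i. cnj (z i))"
proof -
  have inner: "Re (w i * cnj (w j)) = Re (z i * cnj (z j))" for i j
    using arg_cong[OF diff[of i j], of "\<lambda>r. r\<^sup>2"] diff[of i u] diff[of j u]
    unfolding cmod_diff_sq u by simp
  have "Re (w i) = Re (z i)" for i using inner[of i v] v by simp
  moreover have "Im (w i) * Im (w j) = Im (z i) * Im (z j)" for i j
    using inner[of i j] calculation[of i] calculation[of j] by simp
  ultimately show ?thesis by (rule eq_or_eq_cnj_if_Re_eq_Im_mult_eq)
qed

lemma ex_isometry_if_dist_eq:
  fixes x y :: "'a \<Rightarrow> complex"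
  assumes dist_eq: "\<And>i j. dist (y i) (y j) = dist (x i) (x j)"
  obtains f where "\<And>a b. dist (f a) (f b) = dist a b" "\<And>i. y i = f (x i)"
proof (cases "\<forall>i j. x i = x j")
  case True
  show ?thesis
  proof (rule that[of "\<lambda>z. z - x undefined + y undefined"])
    fix a b :: complex
    show "dist (a - x undefined + y undefined) (b - x undefined + y undefined) = dist a b"
      by (simp add: dist_norm)
  next
    fix i
    have "x i = x undefined" using True by blast
    moreover from this have "y i = y undefined" using dist_eq[of i undefined] by simp
    ultimately show "y i = x i - x undefined + y undefined" by simp
  qed
next
  case False
  then obtain u v where uv: "x u \<noteq> x v" by blast
  define c where "c = x v - x u"
  define k where "k = y v - y u"
  have c: "c \<noteq> 0" using uv unfolding c_def by simp
  have k: "cmod k = cmod c" using dist_eq[of v u] unfolding k_def c_def by (simp add: dist_norm)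
  then have "k \<noteq> 0" using c by auto
  \<comment> \<open>Both configurations in the frame where u is at 0 and v at 1.\<close>
  define \<zeta> where "\<zeta> i = (x i - x u) / c" for i
  define \<omega> where "\<omega> i = (y i - y u) / k" for i
  have "cmod (\<omega> i - \<omega> j) = cmod (\<zeta> i - \<zeta> j)" for i j
  proof -
    have "\<omega> i - \<omega> j = (y i - y j) / k" "\<zeta> i - \<zeta> j = (x i - x j) / c"
      unfolding \<omega>_def \<zeta>_def by (simp_all add: diff_divide_distrib)
    then show ?thesis using dist_eq[of i j] k by (simp add: norm_divide dist_norm)
  qed
  moreover have "\<omega> u = 0" "\<zeta> u = 0" "\<omega> v = 1" "\<zeta> v = 1"
    unfolding \<omega>_def \<zeta>_def using c \<open>k \<noteq> 0\<close> by (simp_all add: c_def k_def)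
  ultimately have "\<omega> = \<zeta> \<or> \<omega> = (\<lambda>i. cnj (\<zeta> i))" by (rule eq_or_eq_cnj_if_dist_eq_0_1)
  then obtain g :: "complex \<Rightarrow> complex" where g: "\<And>a b. cmod (g a - g b) = cmod (a - b)"
    and \<omega>g: "\<And>i. \<omega> i = g (\<zeta> i)"
  proof
    assume "\<omega> = \<zeta>"
    then show ?thesis using that[of "\<lambda>z. z"] by simp
  next
    assume "\<omega> = (\<lambda>i. cnj (\<zeta> i))"
    then show ?thesis using that[of cnj] by (metis complex_cnj_diff complex_mod_cnj)
  qed
  show ?thesis
  proof (rule that[of "\<lambda>z. y u + k * g ((z - x u) / c)"])
    fix a b
    have "(a - x u) / c - (b - x u) / c = (a - b) / c" by (simp add: diff_divide_distrib)
    then show "dist (y u + k * g ((a - x u) / c)) (y u + k * g ((b - x u) / c)) = dist a b"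
      using g[of "(a - x u) / c" "(b - x u) / c"] k c
      by (simp add: dist_norm norm_mult norm_divide flip: right_diff_distrib)
  next
    fix i
    show "y i = y u + k * g ((x i - x u) / c)"
      using \<omega>g[of i] \<open>k \<noteq> 0\<close> unfolding \<omega>_def \<zeta>_def by (simp add: field_simps)
  qed
qed

section \<open>Power series germs of a proper flex\<close>

locale normalized_motion =
  fixes X Y :: "'v \<Rightarrow> real fps" and u v :: 'v
  assumes distinct_at_0: "(fps_nth (X v) 0 - fps_nth (X u) 0)\<^sup>2 + (fps_nth (Y v) 0 - fps_nth (Y u) 0)\<^sup>2 > 0"
begin

definition "ax = fps_nth (X v) 0 - fps_nth (X u) 0"
definition "ay = fps_nth (Y v) 0 - fps_nth (Y u) 0"
definition "L = sqrt (ax\<^sup>2 + ay\<^sup>2)"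
definition "Dx = X v - X u"
definition "Dy = Y v - Y u"
definition "S = fps_radical (\<lambda>k x. sqrt x) 2 (Dx * Dx + Dy * Dy)"

text \<open>S is the distance between u and v as a series. (Wx, Wy) is the unit complex number, as a
  series, turning the direction from u to v at time t back into its direction at time 0;
  Xn, Yn apply this rotation about u, which is thereby pinned down.\<close>

definition "Wx = fps_const (1 / L) * (fps_const ax * Dx + fps_const ay * Dy) * inverse S"
definition "Wy = fps_const (1 / L) * (fps_const ay * Dx - fps_const ax * Dy) * inverse S"
definition "Xn i = fps_const (fps_nth (X u) 0) + (X i - X u) * Wx - (Y i - Y u) * Wy" for i
definition "Yn i = fps_const (fps_nth (Y u) 0) + (X i - X u) * Wy + (Y i - Y u) * Wx" for i

lemma L_pos: "0 < L"
  using distinct_at_0 unfolding L_def ax_def ay_def by simp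

lemma L_sq: "L * L = ax\<^sup>2 + ay\<^sup>2"
  unfolding L_def by simp

lemma axy_pos: "0 < ax\<^sup>2 + ay\<^sup>2"
  using distinct_at_0 unfolding ax_def ay_def by simp

lemma axy_nonzero: "ax \<noteq> 0 \<or> ay \<noteq> 0"
  using axy_pos by auto

lemma S_sq: "S * S = Dx * Dx + Dy * Dy"
proof -
  have N0: "fps_nth (Dx * Dx + Dy * Dy) 0 = ax\<^sup>2 + ay\<^sup>2"
    unfolding Dx_def Dy_def ax_def ay_def by (simp add: power2_eq_square)
  then have "fps_nth (Dx * Dx + Dy * Dy) 0 \<noteq> 0" "sqrt (fps_nth (Dx * Dx + Dy * Dy) 0) ^ Suc 1
      = fps_nth (Dx * Dx + Dy * Dy) 0"
    unfolding N0 using axy_pos by (linarith, simp)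
  with power_radical[of "Dx * Dx + Dy * Dy" "\<lambda>k x. sqrt x" 1]
  have "fps_radical (\<lambda>k x. sqrt x) (Suc 1) (Dx * Dx + Dy * Dy) ^ Suc 1 = Dx * Dx + Dy * Dy"
    by simp
  then show ?thesis unfolding S_def by (simp add: power2_eq_square numeral_2_eq_2)
qed

lemma S0: "fps_nth S 0 = L"
  unfolding S_def L_def Dx_def Dy_def ax_def ay_def by (simp add: power2_eq_square)

lemma S_inverse: "S * inverse S = 1"
  using S0 L_pos by (intro inverse_mult_eq_1') simp

lemma W_sq: "Wx * Wx + Wy * Wy = 1"
proof -
  define A where "A = fps_const ax"
  define B where "B = fps_const ay"
  define K where "K = fps_const (1 / L)"
  have "Wx * Wx + Wy * Wy = (K * K * (A * A + B * B)) * (S * S) * (inverse S * inverse S)"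
    unfolding Wx_def Wy_def A_def[symmetric] B_def[symmetric] K_def[symmetric] S_sq
    by (simp add: algebra_simps)
  also have "K * K * (A * A + B * B) = 1"
    unfolding K_def A_def B_def using L_pos L_sq axy_nonzero by (simp add: power2_eq_square field_simps)
  also have "1 * (S * S) * (inverse S * inverse S) = (S * inverse S) * (S * inverse S)"
    by (simp add: algebra_simps)
  finally show ?thesis using S_inverse by simp
qed

lemma sq_dist_normalized:
  "(Xn i - Xn j) * (Xn i - Xn j) + (Yn i - Yn j) * (Yn i - Yn j)
     = (X i - X j) * (X i - X j) + (Y i - Y j) * (Y i - Y j)"
proof -
  have "(Xn i - Xn j) * (Xn i - Xn j) + (Yn i - Yn j) * (Yn i - Yn j)
     = ((X i - X j) * (X i - X j) + (Y i - Y j) * (Y i - Y j)) * (Wx * Wx + Wy * Wy)"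
    unfolding Xn_def Yn_def by (simp add: algebra_simps)
  then show ?thesis using W_sq by simp
qed

lemma Xn_u: "Xn u = fps_const (fps_nth (X u) 0)" and Yn_u: "Yn u = fps_const (fps_nth (Y u) 0)"
  unfolding Xn_def Yn_def by simp_all

lemma Xn_v: "Xn v = fps_const (fps_nth (X u) 0) + fps_const (ax / L) * S"
  and Yn_v: "Yn v = fps_const (fps_nth (Y u) 0) + fps_const (ay / L) * S"
proof -
  define A where "A = fps_const ax"
  define B where "B = fps_const ay"
  define K where "K = fps_const (1 / L)"
  have "S * S * inverse S = S" by (metis S_inverse mult.assoc mult.right_neutral)
  have "Xn v = fps_const (fps_nth (X u) 0) + K * A * (S * S) * inverse S"
    unfolding Xn_def Wx_def Wy_def A_def[symmetric] B_def[symmetric] K_def[symmetric]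
      Dx_def[symmetric] Dy_def[symmetric] S_sq
    by (simp add: algebra_simps)
  then show "Xn v = fps_const (fps_nth (X u) 0) + fps_const (ax / L) * S"
    using \<open>S * S * inverse S = S\<close> unfolding K_def A_def by (simp add: mult.assoc)
  have "Yn v = fps_const (fps_nth (Y u) 0) + K * B * (S * S) * inverse S"
    unfolding Yn_def Wx_def Wy_def A_def[symmetric] B_def[symmetric] K_def[symmetric]
      Dx_def[symmetric] Dy_def[symmetric] S_sq
    by (simp add: algebra_simps)
  then show "Yn v = fps_const (fps_nth (Y u) 0) + fps_const (ay / L) * S"
    using \<open>S * S * inverse S = S\<close> unfolding K_def B_def by (simp add: mult.assoc)
qed

lemma W0: "fps_nth Wx 0 = 1" "fps_nth Wy 0 = 0"
proof -
  have "fps_nth Wx 0 = (1 / L) * (ax * ax + ay * ay) * inverse L"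
    unfolding Wx_def using S0 by (simp add: Dx_def Dy_def ax_def ay_def)
  also have "\<dots> = 1" using L_sq L_pos axy_nonzero by (simp add: power2_eq_square field_simps)
  finally show "fps_nth Wx 0 = 1" .
  show "fps_nth Wy 0 = 0"
    unfolding Wy_def using S0 by (simp add: Dx_def Dy_def ax_def ay_def algebra_simps)
qed

lemma Xn_0: "fps_nth (Xn i) 0 = fps_nth (X i) 0" and Yn_0: "fps_nth (Yn i) 0 = fps_nth (Y i) 0"
  unfolding Xn_def Yn_def using W0 by simp_all

end

definition edge_form :: "'v cfg \<Rightarrow> 'v cfg \<Rightarrow> 'v \<Rightarrow> 'v \<Rightarrow> real" where
  "edge_form p q i j =
     inner (ctr p i - ctr p j) (ctr q i - ctr q j) - (rad p i + rad p j) * (rad q i + rad q j)"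

lemma inf_flex_iff_edge_form: "inf_flex E p q \<longleftrightarrow> (\<forall>(i, j)\<in>E. edge_form p q i j = 0)"
  unfolding inf_flex_def edge_form_def by auto

lemma edge_form_sum:
  "edge_form p (\<lambda>i. (\<Sum>n\<in>J. of_real (w n) * ctr (c n) i, \<Sum>n\<in>J. w n * rad (c n) i)) i j
     = (\<Sum>n\<in>J. w n * edge_form p (c n) i j)"
  unfolding edge_form_def inner_complex_def
  by (simp add: sum_subtractf sum.distrib sum_distrib_left algebra_simps flip: sum_diff_distrib)

locale proper_flex_germ =
  fixes E :: "('v::finite \<times> 'v) set" and Vp Vm Ve :: "'v set" and p :: "'v cfg"
    and X Y R :: "'v \<Rightarrow> real fps" and d :: real and u v :: 'v
  assumes edge: "\<And>i j. (i, j) \<in> E \<Longrightarrow>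
      (X i - X j) * (X i - X j) + (Y i - Y j) * (Y i - Y j) = (R i + R j) * (R i + R j)"
    and X_0: "\<And>i. fps_nth (X i) 0 = Re (ctr p i)"
    and Y_0: "\<And>i. fps_nth (Y i) 0 = Im (ctr p i)"
    and R_0: "\<And>i. fps_nth (R i) 0 = rad p i"
    and d_pos: "0 < d"
    and R_radius: "\<And>i. fps_radius_gt d (R i)"
    and grow: "\<And>i t. i \<in> Vp \<Longrightarrow> t \<in> {0<..<d} \<Longrightarrow> rad p i \<le> eval_fps (R i) t"
    and shrink: "\<And>i t. i \<in> Vm \<Longrightarrow> t \<in> {0<..<d} \<Longrightarrow> eval_fps (R i) t \<le> rad p i"
    and fixed: "\<And>i t. i \<in> Ve \<Longrightarrow> t \<in> {0<..<d} \<Longrightarrow> eval_fps (R i) t = rad p i"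
    and distinct: "ctr p u \<noteq> ctr p v"
begin

sublocale normalized_motion X Y u v
proof
  have "ctr p v - ctr p u \<noteq> 0" using distinct by simp
  then show "0 < (fps_nth (X v) 0 - fps_nth (X u) 0)\<^sup>2 + (fps_nth (Y v) 0 - fps_nth (Y u) 0)\<^sup>2"
    unfolding X_0 Y_0 complex_neq_0 by simp
qed

definition radius_change :: "'v \<Rightarrow> real fps" where
  "radius_change i = R i - fps_const (rad p i)"

lemma radius_change_nth: "fps_nth (radius_change i) n = (if n = 0 then 0 else fps_nth (R i) n)"
  unfolding radius_change_def using R_0 by simp

lemma radius_change_radius_gt: "fps_radius_gt d (radius_change i)"
  unfolding radius_change_def using R_radius by simp

lemma eval_radius_change:
  assumes "t \<in> {0<..<d}"
  shows "eval_fps (radius_change i) t = eval_fps (R i) t - rad p i"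
  using assms R_radius unfolding radius_change_def by (simp add: eval_fps_diff_within[where d = d])

lemma eventually_radius_change_nonneg:
  assumes "i \<in> Vp"
  shows "eventually (\<lambda>t. 0 \<le> eval_fps (radius_change i) t) (at_right 0)"
  using eventually_at_right_real[OF d_pos]
  by (rule eventually_mono) (use assms grow eval_radius_change in fastforce)

lemma eventually_radius_change_nonpos:
  assumes "i \<in> Vm"
  shows "eventually (\<lambda>t. 0 \<le> eval_fps (- radius_change i) t) (at_right 0)"
proof (rule eventually_mono[OF eventually_at_right_real[OF d_pos]])
  fix t assume t: "t \<in> {0<..<d}"
  then have "eval_fps (- radius_change i) t = - eval_fps (radius_change i) t"
    using radius_change_radius_gt by (intro eval_fps_minus fps_radius_gt_imp_norm_less) auto
  then show "0 \<le> eval_fps (- radius_change i) t" using shrink[OF assms t] eval_radius_change[OF t] by simp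
qed

lemma R_fixed:
  assumes "i \<in> Ve"
  shows "R i = fps_const (rad p i)"
  by (rule fps_eq_if_eval_eq_at_right[OF R_radius _ d_pos]) (use assms fixed in simp_all)

definition coeff_cfg :: "nat \<Rightarrow> 'v cfg" where
  "coeff_cfg n i = (Complex (fps_nth (Xn i) n) (fps_nth (Yn i) n), fps_nth (R i) n)"

lemma coeff_cfg_eq_0_iff:
  "coeff_cfg n i = 0 \<longleftrightarrow> fps_nth (Xn i) n = 0 \<and> fps_nth (Yn i) n = 0 \<and> fps_nth (R i) n = 0"
  unfolding coeff_cfg_def by (simp add: zero_prod_def complex_eq_iff)

lemma ctr_coeff_cfg_u: "1 \<le> n \<Longrightarrow> ctr (coeff_cfg n) u = 0"
  unfolding coeff_cfg_def Xn_u Yn_u by (simp add: complex_eq_iff)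

lemma ctr_coeff_cfg_v:
  "1 \<le> n \<Longrightarrow> ctr (coeff_cfg n) v = of_real (fps_nth S n / L) * (ctr p v - ctr p u)"
  unfolding coeff_cfg_def Xn_v Yn_v ax_def ay_def X_0 Y_0 by (simp add: complex_eq_iff)

lemma edge_normalized:
  "(i, j) \<in> E \<Longrightarrow> (Xn i - Xn j) * (Xn i - Xn j) + (Yn i - Yn j) * (Yn i - Yn j) = (R i + R j) * (R i + R j)"
  unfolding sq_dist_normalized by (rule edge)

lemma edge_form_coeff_cfg:
  "edge_form p (coeff_cfg n) i j = fps_nth (Xn i - Xn j) 0 * fps_nth (Xn i - Xn j) n
     + fps_nth (Yn i - Yn j) 0 * fps_nth (Yn i - Yn j) n - fps_nth (R i + R j) 0 * fps_nth (R i + R j) n"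
  unfolding edge_form_def coeff_cfg_def inner_complex_def using Xn_0 Yn_0 X_0 Y_0 R_0 by simp

end

locale nonconstant_proper_flex_germ = proper_flex_germ +
  assumes nonconstant: "\<exists>n\<ge>1. \<exists>i. coeff_cfg n i \<noteq> 0"
begin

definition order :: nat where
  "order = (LEAST n. 1 \<le> n \<and> (\<exists>i. coeff_cfg n i \<noteq> 0))"

definition leading_flex where
  "leading_flex = coeff_cfg order"

lemma order_ge_1: "1 \<le> order" and leading_flex_nonzero: "\<exists>i. leading_flex i \<noteq> 0"
  using LeastI_ex[OF nonconstant] unfolding order_def leading_flex_def by auto

lemma coeff_cfg_below_order: "0 < n \<Longrightarrow> n < order \<Longrightarrow> coeff_cfg n i = 0"
  using not_less_Least[of n "\<lambda>n. 1 \<le> n \<and> (\<exists>i. coeff_cfg n i \<noteq> 0)"] unfolding order_def by auto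

lemma edge_coeff:
  assumes "(i, j) \<in> E" "0 < n" "n \<le> 2 * order"
  shows "2 * edge_form p (coeff_cfg n) i j + (if n = 2 * order
    then (cmod (ctr leading_flex i - ctr leading_flex j))\<^sup>2 - (rad leading_flex i + rad leading_flex j)\<^sup>2
    else 0) = 0"
proof -
  have "\<forall>m. 0 < m \<and> m < order \<longrightarrow> fps_nth (Xn i - Xn j) m = 0 \<and> fps_nth (Yn i - Yn j) m = 0
      \<and> fps_nth (R i + R j) m = 0"
    using coeff_cfg_below_order by (simp add: coeff_cfg_eq_0_iff)
  from fps_sum_squares_nth_if_gap[OF edge_normalized[OF assms(1)] order_ge_1 this assms(2,3)]
  show ?thesis
    unfolding edge_form_coeff_cfg leading_flex_def cmod_power2 coeff_cfg_def fps_sub_nth fps_add_nth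
    by (cases "n = 2 * order") simp_all
qed

lemma leading_flex_inf_flex: "inf_flex E p leading_flex"
  unfolding inf_flex_iff_edge_form leading_flex_def
  using edge_coeff[of _ _ order] order_ge_1 by auto

lemma radius_change_below_order:
  "j < order \<Longrightarrow> fps_nth (radius_change i) j = 0"
  using coeff_cfg_below_order[of j i] by (auto simp: radius_change_nth coeff_cfg_eq_0_iff)

lemma rad_leading_flex: "rad leading_flex i = fps_nth (radius_change i) order"
  using order_ge_1 unfolding leading_flex_def coeff_cfg_def by (simp add: radius_change_nth)

lemma leading_flex_proper: "proper_inf Vp Vm Ve leading_flex"
  unfolding proper_inf_def rad_leading_flex
proof (intro conjI ballI)
  fix i assume "i \<in> Vp"
  then show "0 \<le> fps_nth (radius_change i) order"
    using fps_radius_gt_imp_pos[OF radius_change_radius_gt d_pos] eventually_radius_change_nonneg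
      radius_change_below_order by (intro fps_nth_nonneg_if_eventually_nonneg) auto
next
  fix i assume "i \<in> Vm"
  then have "0 \<le> fps_nth (- radius_change i) order"
    using fps_radius_gt_imp_pos[OF radius_change_radius_gt d_pos] eventually_radius_change_nonpos
      radius_change_below_order by (intro fps_nth_nonneg_if_eventually_nonneg) auto
  then show "fps_nth (radius_change i) order \<le> 0" by simp
next
  fix i assume "i \<in> Ve"
  then show "fps_nth (radius_change i) order = 0" using R_fixed order_ge_1 by (simp add: radius_change_nth)
qed

text \<open>Rotations and translations are excluded by the normalization: u does not move
  and v can only move along the line through u and v.\<close>

lemma leading_flex_nontrivial: "\<not> trivial_inf p leading_flex"
proof
  assume "trivial_inf p leading_flex"
  then obtain a :: complex and \<omega> :: real
    where triv: "\<And>i. ctr leading_flex i = a + \<i> * of_real \<omega> * ctr p i \<and> rad leading_flex i = 0"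
    unfolding trivial_inf_def by blast
  define \<sigma> where "\<sigma> = fps_nth S order / L"
  have u: "ctr leading_flex u = 0" and v: "ctr leading_flex v = of_real \<sigma> * (ctr p v - ctr p u)"
    unfolding leading_flex_def \<sigma>_def using ctr_coeff_cfg_u ctr_coeff_cfg_v order_ge_1 by auto
  have "ctr leading_flex v - ctr leading_flex u = \<i> * of_real \<omega> * (ctr p v - ctr p u)"
    using triv[of u] triv[of v] by (simp add: algebra_simps)
  then have "(of_real \<sigma> - \<i> * of_real \<omega>) * (ctr p v - ctr p u) = 0"
    unfolding u v by (simp add: left_diff_distrib)
  then have "of_real \<sigma> = \<i> * of_real \<omega>" using distinct by simp
  then have "\<omega> = 0" by (simp add: complex_eq_iff)
  then have "leading_flex i = 0" for i using triv[of i] triv[of u] u by (simp add: zero_prod_def prod_eq_iff)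
  then show False using leading_flex_nonzero by blast
qed

lemma eventually_cutoff_signs:
  "eventually (\<lambda>t. (\<forall>i\<in>Vp. 0 \<le> (\<Sum>n<N. fps_nth (radius_change i) n * t ^ n))
     \<and> (\<forall>i\<in>Vm. 0 \<le> (\<Sum>n<N. fps_nth (- radius_change i) n * t ^ n))) (at_right 0)"
  using fps_radius_gt_imp_pos[OF radius_change_radius_gt d_pos]
    eventually_radius_change_nonneg eventually_radius_change_nonpos
  by (intro eventually_conj eventually_ball_finite ballI eventually_fps_cutoff_nonneg) auto

text \<open>This is the second order extension: the edge equations of the intermediate orders vanish,
  and for small \<tau> the truncated radius changes have the required signs.\<close>

definition second_order_ext where
  "second_order_ext \<tau> i =
     (\<Sum>n\<in>{order<..2 * order}. of_real (2 * \<tau> ^ n / \<tau> ^ (2 * order)) * ctr (coeff_cfg n) i,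
      \<Sum>n\<in>{order<..2 * order}. 2 * \<tau> ^ n / \<tau> ^ (2 * order) * rad (coeff_cfg n) i)"

lemma edge_form_second_order_ext:
  assumes "(i, j) \<in> E" "\<tau> \<noteq> 0"
  shows "edge_form p (second_order_ext \<tau>) i j
    = (rad leading_flex i + rad leading_flex j)\<^sup>2 - (cmod (ctr leading_flex i - ctr leading_flex j))\<^sup>2"
proof -
  have mid: "edge_form p (coeff_cfg n) i j = 0" if "n \<in> {order<..2 * order} - {2 * order}" for n
    using edge_coeff[OF assms(1), of n] that order_ge_1 by auto
  have "edge_form p (second_order_ext \<tau>) i j
      = (\<Sum>n\<in>{order<..2 * order}. 2 * \<tau> ^ n / \<tau> ^ (2 * order) * edge_form p (coeff_cfg n) i j)"
    unfolding second_order_ext_def by (rule edge_form_sum)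
  also have "\<dots> = 2 * \<tau> ^ (2 * order) / \<tau> ^ (2 * order) * edge_form p (coeff_cfg (2 * order)) i j"
    using order_ge_1 mid by (subst sum.remove[of _ "2 * order"]) auto
  also have "\<dots> = (rad leading_flex i + rad leading_flex j)\<^sup>2
      - (cmod (ctr leading_flex i - ctr leading_flex j))\<^sup>2"
    using edge_coeff[OF assms(1), of "2 * order"] order_ge_1 assms(2) by simp
  finally show ?thesis .
qed

lemma rad_second_order_ext:
  assumes "rad leading_flex i = 0"
  shows "rad (second_order_ext \<tau>) i
    = 2 / \<tau> ^ (2 * order) * (\<Sum>n<Suc (2 * order). fps_nth (radius_change i) n * \<tau> ^ n)"
proof -
  define J where "J = {order<..2 * order}"
  have "{..<Suc (2 * order)} = {..order} \<union> J" "{..order} \<inter> J = {}" unfolding J_def by auto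
  then have "(\<Sum>n<Suc (2 * order). fps_nth (radius_change i) n * \<tau> ^ n)
      = (\<Sum>n\<le>order. fps_nth (radius_change i) n * \<tau> ^ n) + (\<Sum>n\<in>J. fps_nth (radius_change i) n * \<tau> ^ n)"
    by (simp add: sum.union_disjoint J_def)
  also have "(\<Sum>n\<le>order. fps_nth (radius_change i) n * \<tau> ^ n) = 0"
    using assms radius_change_below_order unfolding rad_leading_flex
    by (intro sum.neutral) (auto simp: le_less)
  also have "(\<Sum>n\<in>J. fps_nth (radius_change i) n * \<tau> ^ n) = (\<Sum>n\<in>J. fps_nth (R i) n * \<tau> ^ n)"
    by (intro sum.cong) (auto simp: J_def radius_change_nth)
  finally show ?thesis
    unfolding second_order_ext_def coeff_cfg_def J_def
    by (simp add: sum_distrib_left sum_divide_distrib algebra_simps)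
qed

lemma rad_second_order_ext_fixed: "i \<in> Ve \<Longrightarrow> rad (second_order_ext \<tau>) i = 0"
  using R_fixed unfolding second_order_ext_def coeff_cfg_def by simp

lemma leading_flex_extendable: "extendable E Vp Vm Ve p leading_flex"
proof -
  define N where "N = Suc (2 * order)"
  have "eventually (\<lambda>t. 0 < t) (at_right (0::real))" by (simp add: eventually_at_right_less)
  from eventually_happens[OF eventually_conj[OF this eventually_cutoff_signs[of N]]]
  obtain \<tau> :: real where \<tau>: "0 < \<tau>"
    and Vp: "\<And>i. i \<in> Vp \<Longrightarrow> 0 \<le> (\<Sum>n<N. fps_nth (radius_change i) n * \<tau> ^ n)"
    and Vm: "\<And>i. i \<in> Vm \<Longrightarrow> 0 \<le> (\<Sum>n<N. fps_nth (- radius_change i) n * \<tau> ^ n)"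
    using trivial_limit_at_right_real by blast
  show ?thesis
    unfolding extendable_def
  proof (intro exI[of _ "second_order_ext \<tau>"] conjI ballI; clarify?)
    fix i j assume "(i, j) \<in> E"
    from edge_form_second_order_ext[OF this] \<tau>
    show "inner (ctr p i - ctr p j) (ctr (second_order_ext \<tau>) i - ctr (second_order_ext \<tau>) j)
        - (rad p i + rad p j) * (rad (second_order_ext \<tau>) i + rad (second_order_ext \<tau>) j)
        = (rad leading_flex i + rad leading_flex j)\<^sup>2
          - inner (ctr leading_flex i - ctr leading_flex j) (ctr leading_flex i - ctr leading_flex j)"
      unfolding edge_form_def by (simp add: power2_norm_eq_inner)
  next
    fix i assume "i \<in> Vp" "rad leading_flex i = 0"
    then show "0 \<le> rad (second_order_ext \<tau>) i"
      unfolding rad_second_order_ext[OF \<open>rad leading_flex i = 0\<close>] using Vp \<tau> N_def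
      by (intro mult_nonneg_nonneg) simp_all
  next
    fix i assume "i \<in> Vm" "rad leading_flex i = 0"
    have "(\<Sum>n<N. fps_nth (- radius_change i) n * \<tau> ^ n) = - (\<Sum>n<N. fps_nth (radius_change i) n * \<tau> ^ n)"
      by (simp only: fps_neg_nth mult_minus_left sum_negf)
    then show "rad (second_order_ext \<tau>) i \<le> 0"
      unfolding rad_second_order_ext[OF \<open>rad leading_flex i = 0\<close>] using Vm[OF \<open>i \<in> Vm\<close>] \<tau> N_def
      by (intro mult_nonneg_nonpos) simp_all
  qed (use rad_second_order_ext_fixed in blast)
qed

theorem not_second_order_rigid: "\<not> second_order_rigid E Vp Vm Ve p"
  unfolding second_order_rigid_def
  using leading_flex_inf_flex leading_flex_proper leading_flex_nontrivial leading_flex_extendable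
  by blast

end

context proper_flex_germ
begin

lemma coeff_cfg_eq_0_if_second_order_rigid:
  assumes "second_order_rigid E Vp Vm Ve p" "1 \<le> n"
  shows "coeff_cfg n i = 0"
proof (rule ccontr)
  assume "coeff_cfg n i \<noteq> 0"
  then interpret nonconstant_proper_flex_germ E Vp Vm Ve p X Y R d u v
    by unfold_locales (use assms(2) in blast)
  show False using not_second_order_rigid assms(1) by blast
qed

lemma germ_const_if_second_order_rigid:
  assumes "second_order_rigid E Vp Vm Ve p"
  shows "(X i - X j) * (X i - X j) + (Y i - Y j) * (Y i - Y j) = fps_const ((cmod (ctr p i - ctr p j))\<^sup>2)"
    and "R i = fps_const (rad p i)"
proof -
  have const: "Xn l = fps_const (Re (ctr p l))" "Yn l = fps_const (Im (ctr p l))"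
    "R l = fps_const (rad p l)" for l
    using coeff_cfg_eq_0_if_second_order_rigid[OF assms, of _ l] Xn_0 Yn_0 X_0 Y_0 R_0
    by (auto intro!: fps_ext simp: coeff_cfg_eq_0_iff not_less_eq_eq[symmetric])
  show "(X i - X j) * (X i - X j) + (Y i - Y j) * (Y i - Y j) = fps_const ((cmod (ctr p i - ctr p j))\<^sup>2)"
    unfolding sq_dist_normalized[symmetric] const cmod_power2 by (simp add: power2_eq_square)
  show "R i = fps_const (rad p i)" by (fact const)
qed

end

lemma analytic_path_fps_near_0:
  fixes P :: "real \<Rightarrow> 'v::finite cfg"
  assumes "analytic_path P"
  obtains d X Y R where "0 < d" "d \<le> 1"
    "\<And>i. fps_radius_gt d (X i)" "\<And>i. fps_radius_gt d (Y i)" "\<And>i. fps_radius_gt d (R i)"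
    "\<And>i h. h \<in> {0..<d} \<Longrightarrow> eval_fps (X i) h = Re (ctr (P h) i) \<and> eval_fps (Y i) h = Im (ctr (P h) i)
       \<and> eval_fps (R i) h = rad (P h) i"
proof -
  have ana: "\<And>i. real_analytic_on (\<lambda>t. Re (ctr (P t) i)) {0..1}"
    "\<And>i. real_analytic_on (\<lambda>t. Im (ctr (P t) i)) {0..1}"
    "\<And>i. real_analytic_on (\<lambda>t. rad (P t) i) {0..1}"
    using assms unfolding analytic_path_def by simp_all
  obtain d1 X where d1: "0 < d1" "d1 \<le> 1" "\<And>i. fps_radius_gt d1 (X i)"
    and X: "\<And>i h. h \<in> {0..<d1} \<Longrightarrow> eval_fps (X i) h = Re (ctr (P h) i)"
    by (rule real_analytic_family_fps_near_0[of "\<lambda>i t. Re (ctr (P t) i)", OF ana(1)]) blast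
  obtain d2 Y where d2: "0 < d2" "d2 \<le> 1" "\<And>i. fps_radius_gt d2 (Y i)"
    and Y: "\<And>i h. h \<in> {0..<d2} \<Longrightarrow> eval_fps (Y i) h = Im (ctr (P h) i)"
    by (rule real_analytic_family_fps_near_0[of "\<lambda>i t. Im (ctr (P t) i)", OF ana(2)]) blast
  obtain d3 R where d3: "0 < d3" "d3 \<le> 1" "\<And>i. fps_radius_gt d3 (R i)"
    and R: "\<And>i h. h \<in> {0..<d3} \<Longrightarrow> eval_fps (R i) h = rad (P h) i"
    by (rule real_analytic_family_fps_near_0[of "\<lambda>i t. rad (P t) i", OF ana(3)]) blast
  define d where "d = min d1 (min d2 d3)"
  show ?thesis
  proof (rule that[of d X Y R])
    show "0 < d" "d \<le> 1" using d1 d2 d3 unfolding d_def by auto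
    show "fps_radius_gt d (X i)" "fps_radius_gt d (Y i)" "fps_radius_gt d (R i)" for i
      using fps_radius_gt_mono[OF d1(3)] fps_radius_gt_mono[OF d2(3)] fps_radius_gt_mono[OF d3(3)]
      unfolding d_def by simp_all
    show "eval_fps (X i) h = Re (ctr (P h) i) \<and> eval_fps (Y i) h = Im (ctr (P h) i)
       \<and> eval_fps (R i) h = rad (P h) i" if "h \<in> {0..<d}" for i h
      using X[of h i] Y[of h i] R[of h i] that unfolding d_def by auto
  qed
qed

lemma proper_flex_germ_at_0:
  fixes P :: "real \<Rightarrow> 'v::finite cfg"
  assumes flex: "proper_flex E rot Vp Vm Ve p P" and uv: "ctr p u \<noteq> ctr p v"
  obtains d X Y R where "proper_flex_germ E Vp Vm Ve p X Y R d u v"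
    "\<And>i. fps_radius_gt d (X i)" "\<And>i. fps_radius_gt d (Y i)"
    "\<And>i h. h \<in> {0..<d} \<Longrightarrow> eval_fps (X i) h = Re (ctr (P h) i) \<and> eval_fps (Y i) h = Im (ctr (P h) i)
       \<and> eval_fps (R i) h = rad (P h) i"
proof -
  have P0: "P 0 = p" and ana: "analytic_path P"
    and PP: "\<And>t. t \<in> {0..1} \<Longrightarrow> packing E rot (P t) \<and>
        (\<forall>i\<in>Vp. rad (P t) i \<ge> rad p i) \<and> (\<forall>i\<in>Vm. rad (P t) i \<le> rad p i) \<and> (\<forall>i\<in>Ve. rad (P t) i = rad p i)"
    using flex unfolding proper_flex_def by auto
  obtain d X Y R where d: "0 < d" "d \<le> 1" and rX: "\<And>i. fps_radius_gt d (X i)"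
    and rY: "\<And>i. fps_radius_gt d (Y i)" and rR: "\<And>i. fps_radius_gt d (R i)"
    and ev: "\<And>i h. h \<in> {0..<d} \<Longrightarrow> eval_fps (X i) h = Re (ctr (P h) i) \<and> eval_fps (Y i) h = Im (ctr (P h) i)
       \<and> eval_fps (R i) h = rad (P h) i"
    using analytic_path_fps_near_0[OF ana] by blast
  have in01: "h \<in> {0..1}" if "h \<in> {0<..<d}" for h using that d by auto
  have "(X i - X j) * (X i - X j) + (Y i - Y j) * (Y i - Y j) = (R i + R j) * (R i + R j)"
    if ij: "(i, j) \<in> E" for i j
  proof (rule fps_eq_if_eval_eq_at_right[where d = d])
    fix h assume h: "h \<in> {0<..<d}"
    have "(rad (P h) i + rad (P h) j)\<^sup>2 = (cmod (ctr (P h) i - ctr (P h) j))\<^sup>2"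
      using PP[OF in01[OF h]] ij unfolding packing_def by auto
    then show "eval_fps ((X i - X j) * (X i - X j) + (Y i - Y j) * (Y i - Y j)) h
        = eval_fps ((R i + R j) * (R i + R j)) h"
      using h ev[of h i] ev[of h j] rX rY rR unfolding cmod_power2
      by (simp add: eval_fps_add_within[where d = d] eval_fps_diff_within[where d = d]
          eval_fps_mult_within[where d = d] power2_eq_square)
  qed (use rX rY rR d in simp_all)
  moreover have "fps_nth (X i) 0 = Re (ctr p i)" "fps_nth (Y i) 0 = Im (ctr p i)" "fps_nth (R i) 0 = rad p i"
    for i using ev[of 0 i] d P0 by (simp_all add: eval_fps_at_0)
  moreover have "rad p i \<le> eval_fps (R i) t" if "i \<in> Vp" "t \<in> {0<..<d}" for i t
    using that PP[OF in01] ev[of t i] by auto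
  moreover have "eval_fps (R i) t \<le> rad p i" if "i \<in> Vm" "t \<in> {0<..<d}" for i t
    using that PP[OF in01] ev[of t i] by auto
  moreover have "eval_fps (R i) t = rad p i" if "i \<in> Ve" "t \<in> {0<..<d}" for i t
    using that PP[OF in01] ev[of t i] by auto
  ultimately have "proper_flex_germ E Vp Vm Ve p X Y R d u v"
    using d(1) rR uv by unfold_locales auto
  then show ?thesis using that rX rY ev by blast
qed

definition congruent_cfg :: "'v cfg \<Rightarrow> 'v cfg \<Rightarrow> bool" where
  "congruent_cfg p q \<longleftrightarrow>
     (\<forall>i j. cmod (ctr q i - ctr q j) = cmod (ctr p i - ctr p j)) \<and> (\<forall>i. rad q i = rad p i)"

lemma proper_flex_locally_congruent:
  fixes P :: "real \<Rightarrow> 'v::finite cfg"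
  assumes "second_order_rigid E Vp Vm Ve p" "proper_flex E rot Vp Vm Ve p P" "ctr p u \<noteq> ctr p v"
  obtains d where "0 < d" "\<And>t. t \<in> {0..<d} \<Longrightarrow> congruent_cfg p (P t)"
proof -
  obtain d X Y R where "proper_flex_germ E Vp Vm Ve p X Y R d u v"
    and rX: "\<And>i. fps_radius_gt d (X i)" and rY: "\<And>i. fps_radius_gt d (Y i)"
    and ev: "\<And>i h. h \<in> {0..<d} \<Longrightarrow> eval_fps (X i) h = Re (ctr (P h) i)
      \<and> eval_fps (Y i) h = Im (ctr (P h) i) \<and> eval_fps (R i) h = rad (P h) i"
    by (rule proper_flex_germ_at_0[OF assms(2,3)]) (rule that)
  then interpret proper_flex_germ E Vp Vm Ve p X Y R d u v by simp
  have "congruent_cfg p (P t)" if t: "t \<in> {0..<d}" for t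
    unfolding congruent_cfg_def
  proof (intro conjI allI)
    fix i j
    have "\<bar>t\<bar> < d" using t by simp
    then have "eval_fps ((X i - X j) * (X i - X j) + (Y i - Y j) * (Y i - Y j)) t
        = (cmod (ctr (P t) i - ctr (P t) j))\<^sup>2"
      using ev[OF t, of i] ev[OF t, of j] rX rY unfolding cmod_power2
      by (simp add: eval_fps_add_within[where d = d] eval_fps_diff_within[where d = d]
          eval_fps_mult_within[where d = d] power2_eq_square)
    then have "(cmod (ctr (P t) i - ctr (P t) j))\<^sup>2 = (cmod (ctr p i - ctr p j))\<^sup>2"
      unfolding germ_const_if_second_order_rigid(1)[OF assms(1)] by simp
    then show "cmod (ctr (P t) i - ctr (P t) j) = cmod (ctr p i - ctr p j)"
      by (simp add: power2_eq_iff_nonneg)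
  next
    fix i
    show "rad (P t) i = rad p i"
      using ev[OF t, of i] germ_const_if_second_order_rigid(2)[OF assms(1)] by simp
  qed
  then show ?thesis using that d_pos by blast
qed

lemma analytic_path_congruent_if_locally_congruent:
  fixes P :: "real \<Rightarrow> 'v::finite cfg"
  assumes ana: "analytic_path P" and d: "0 < d" and loc: "\<And>t. t \<in> {0..<d} \<Longrightarrow> congruent_cfg p (P t)"
  shows "t \<in> {0..1} \<Longrightarrow> congruent_cfg p (P t)"
proof -
  have X: "locally_fps (\<lambda>t. Re (ctr (P t) i))" and Y: "locally_fps (\<lambda>t. Im (ctr (P t) i))"
    and R: "locally_fps (\<lambda>t. rad (P t) i)" for i
    using ana unfolding analytic_path_def by (auto intro: real_analytic_on_imp_locally_fps)
  assume t: "t \<in> {0..1}"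
  show "congruent_cfg p (P t)"
    unfolding congruent_cfg_def
  proof (intro conjI allI)
    fix i j
    define c where "c = (cmod (ctr p i - ctr p j))\<^sup>2"
    define g where "g s = (Re (ctr (P s) i) - Re (ctr (P s) j)) * (Re (ctr (P s) i) - Re (ctr (P s) j))
        + (Im (ctr (P s) i) - Im (ctr (P s) j)) * (Im (ctr (P s) i) - Im (ctr (P s) j)) - c" for s
    have "locally_fps g"
      unfolding g_def using X Y
      by (intro locally_fps_diff locally_fps_add locally_fps_mult locally_fps_const) auto
    moreover have g_cmod: "g s = (cmod (ctr (P s) i - ctr (P s) j))\<^sup>2 - c" for s
      unfolding g_def cmod_power2 by (simp add: power2_eq_square)
    then have "\<forall>s\<in>{0..<d}. g s = 0" using loc unfolding congruent_cfg_def c_def by simp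
    ultimately have "g t = 0" using locally_fps_eq_0_if_eq_0_near_0[OF _ d] t by blast
    then show "cmod (ctr (P t) i - ctr (P t) j) = cmod (ctr p i - ctr p j)"
      unfolding g_cmod c_def by (simp add: power2_eq_iff_nonneg)
  next
    fix i
    have "locally_fps (\<lambda>s. rad (P s) i - rad p i)" using R by (intro locally_fps_diff locally_fps_const)
    moreover have "\<forall>s\<in>{0..<d}. rad (P s) i - rad p i = 0" using loc unfolding congruent_cfg_def by simp
    ultimately show "rad (P t) i = rad p i" using locally_fps_eq_0_if_eq_0_near_0[OF _ d] t by fastforce
  qed
qed

lemma congruent_motion_if_congruent_cfg:
  assumes "\<And>t. t \<in> {0..1} \<Longrightarrow> congruent_cfg p (P t)"
  shows "congruent_motion p P"
  unfolding congruent_motion_def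
proof
  fix t :: real assume "t \<in> {0..1}"
  then have "dist (ctr (P t) i) (ctr (P t) j) = dist (ctr p i) (ctr p j)"
    and "rad (P t) i = rad p i" for i j
    using assms unfolding congruent_cfg_def dist_norm by auto
  with ex_isometry_if_dist_eq[of "ctr (P t)" "ctr p"]
  show "\<exists>f. (\<forall>x y. dist (f x) (f y) = dist x y) \<and> (\<forall>i. ctr (P t) i = f (ctr p i) \<and> rad (P t) i = rad p i)"
    by metis
qed

text \<open>If all centers coincide, the packing has no edges, so any displacement of a single
  vertex, and any change of a radius not in Ve, is a nontrivial, extendable, proper
  infinitesimal flex.\<close>

lemma second_order_rigid_coincident_centers:
  fixes E :: "('v \<times> 'v) set" and p :: "'v cfg"
  assumes pack: "packing E rot p" and part: "vertex_partition Vp Vm Ve V0"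
    and sor: "second_order_rigid E Vp Vm Ve p" and same: "\<And>i j. ctr p i = ctr p j"
  shows "\<And>i j :: 'v. i = j" and "\<And>i. i \<in> Ve"
proof -
  have E: "E = {}"
  proof (rule ccontr)
    assume "E \<noteq> {}"
    then obtain i j where "(i, j) \<in> E" by auto
    with pack same[of i j] have "(rad p i + rad p j)\<^sup>2 = 0" unfolding packing_def by auto
    moreover have "0 < rad p i + rad p j" using pack unfolding packing_def by (simp add: add_pos_pos)
    ultimately show False by simp
  qed
  have extendable_E: "extendable E Vp Vm Ve p q" for q
    unfolding extendable_def E by (intro exI[of _ "\<lambda>_. (0, 0)"]) simp
  have inf_flex_E: "inf_flex E p q" for q unfolding inf_flex_def E by simp
  show single: "i = j" for i j :: 'v
  proof (rule ccontr)
    assume ij: "i \<noteq> j"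
    define q :: "'v cfg" where "q w = (if w = i then 1 else 0, 0)" for w
    have "trivial_inf p q \<Longrightarrow> False"
      unfolding trivial_inf_def q_def using same[of i j] ij by (metis fst_conv zero_neq_one)
    moreover have "proper_inf Vp Vm Ve q" unfolding proper_inf_def q_def by simp
    ultimately show False
      using sor inf_flex_E extendable_E unfolding second_order_rigid_def by blast
  qed
  show "i \<in> Ve" for i
  proof (rule ccontr)
    assume "i \<notin> Ve"
    then have notVe: "w \<notin> Ve" for w using single[of w i] by simp
    define q :: "'v cfg" where "q w = (0, if w \<in> Vm then -1 else 1)" for w
    have "trivial_inf p q \<Longrightarrow> False" unfolding trivial_inf_def q_def by (auto split: if_splits)
    moreover have "proper_inf Vp Vm Ve q"
      using part notVe unfolding proper_inf_def q_def vertex_partition_def by auto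
    ultimately show False
      using sor inf_flex_E extendable_E unfolding second_order_rigid_def by blast
  qed
qed

theorem mainTheorem8:
  fixes E :: "('v::finite \<times> 'v) set" and rot :: "'v \<Rightarrow> 'v list"
    and Vp Vm Ve V0 :: "'v set" and p :: "'v cfg"
  assumes "planar_embedded_graph E rot"
    and "packing E rot p"
    and "vertex_partition Vp Vm Ve V0"
    and "second_order_rigid E Vp Vm Ve p"
  shows "rigid E rot Vp Vm Ve p"
  unfolding rigid_def
proof (intro allI impI)
  fix P assume flex: "proper_flex E rot Vp Vm Ve p P"
  have "congruent_cfg p (P t)" if t: "t \<in> {0..1}" for t
  proof (cases "\<forall>i j. ctr p i = ctr p j")
    case True
    then have single: "i = j" and fixed: "i \<in> Ve" for i j :: 'v
      using second_order_rigid_coincident_centers[OF assms(2-4)] by blast+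
    have "rad (P t) i = rad p i" for i using flex t fixed[of i] unfolding proper_flex_def by blast
    moreover have "cmod (ctr (P t) i - ctr (P t) j) = cmod (ctr p i - ctr p j)" for i j
      using single[of i j] by simp
    ultimately show ?thesis unfolding congruent_cfg_def by blast
  next
    case False
    then obtain u v where "ctr p u \<noteq> ctr p v" by blast
    with proper_flex_locally_congruent[OF assms(4) flex]
    obtain d where "0 < d" "\<And>t. t \<in> {0..<d} \<Longrightarrow> congruent_cfg p (P t)" by blast
    with flex t show ?thesis
      unfolding proper_flex_def by (blast intro: analytic_path_congruent_if_locally_congruent)
  qed
  then show "congruent_motion p P" by (rule congruent_motion_if_congruent_cfg)
qed

end
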